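(* Let $r$ be a prime power, $q=r^2$, and let $M$ be a positive integer with $M\mid(r+1)$. If there exist Hermitian self-orthogonal linear codes over $\mathbb{F}_q$ with parameters $[m,k_1,d_1]_q,[m,k_2,d_2]_q,\dots,[m,k_M,d_M]_q$, then there exists a Hermitian self-orthogonal linear code over $\mathbb{F}_q$ with parameters $[Mm,k_1+k_2+\cdots+k_M,d]_q$ where $d\ge\min\{Md_1,(M-1)d_2,\dots,d_M\}$ (i.e., $d\ge\min_{1\le i\le M}(M-i+1)d_i$).
   Context: For $a\in\mathbb{F}_q$, $\overline{a}:=a^r$. The Hermitian inner product on $\mathbb{F}_q^n$ is $\langle u,v\rangle_H=\sum_i u_i\overline{v_i}$; a linear code $C$ is Hermitian self-orthogonal if $C\subseteq C^{\perp_H}$. A code with parameters $[n,k,d]_q$ is a linear code of length $n$, dimension $k$ and minimum Hamming weight $d$ over $\mathbb{F}_q$. *)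

theory Defs
  imports "HOL-Analysis.Analysis" "HOL-Computational_Algebra.Primes" "HOL-Library.Function_Algebras"
begin

text \<open>Vectors of length n over a field are modelled as functions nat => 'a
  vanishing outside {0..<n}; scalar multiplication is componentwise.\<close>

definition vscale :: "'a::field \<Rightarrow> (nat \<Rightarrow> 'a) \<Rightarrow> (nat \<Rightarrow> 'a)" where
  "vscale c v = (\<lambda>i. c * v i)"

definition linear_code :: "nat \<Rightarrow> (nat \<Rightarrow> 'a::field) set \<Rightarrow> bool" where
  "linear_code n C \<longleftrightarrow> module.subspace vscale C \<and> (\<forall>v\<in>C. \<forall>i\<ge>n. v i = 0)"

definition code_dim :: "(nat \<Rightarrow> 'a::field) set \<Rightarrow> nat" where
  "code_dim C = vector_space.dim vscale C"

definition hamming_wt :: "nat \<Rightarrow> (nat \<Rightarrow> 'a::zero) \<Rightarrow> nat" where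
  "hamming_wt n v = card {i. i < n \<and> v i \<noteq> 0}"

text \<open>Minimum distance = minimum weight of a nonzero codeword (0 for the zero code).\<close>
definition min_dist :: "nat \<Rightarrow> (nat \<Rightarrow> 'a::zero) set \<Rightarrow> nat" where
  "min_dist n C = Inf {hamming_wt n v | v. v \<in> C \<and> v \<noteq> 0}"

text \<open>Conjugation a |-> a^r and the Hermitian inner product.\<close>
definition herm_ip :: "nat \<Rightarrow> nat \<Rightarrow> (nat \<Rightarrow> 'a::field) \<Rightarrow> (nat \<Rightarrow> 'a) \<Rightarrow> 'a" where
  "herm_ip r n u v = (\<Sum>i<n. u i * (v i) ^ r)"

definition herm_self_orth :: "nat \<Rightarrow> nat \<Rightarrow> (nat \<Rightarrow> 'a::field) set \<Rightarrow> bool" where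
  "herm_self_orth r n C \<longleftrightarrow> (\<forall>u\<in>C. \<forall>v\<in>C. herm_ip r n u v = 0)"

definition prime_power :: "nat \<Rightarrow> bool" where
  "prime_power r \<longleftrightarrow> (\<exists>p e. prime p \<and> e \<ge> 1 \<and> r = p ^ e)"

end

theory Submission
  imports Defs "HOL-Number_Theory.Residues" "HOL-Decision_Procs.Algebra_Aux"
    "HOL-Algebra.Multiplicative_Group"
begin

(* Pick w in F_q of multiplicative order M, possible as M divides r + 1, which divides q - 1,
   and take the matrix-product code [C_1, ..., C_M] A with the Vandermonde matrix
   A_ij = w^((i-1)(j-1)). Since w^r = w^-1, the rows of A are orthogonal for the Hermitian form,
   A A^H = M I, and M is a unit of F_q because it divides r + 1, which is prime to the
   characteristic. As x |-> x^r is additive, <uA, vA>_H = M * sum_i <u_i, v_i>_H, so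
   self-orthogonality passes to the product code, and A is invertible, so dimensions add.
   For the distance let c_s be the last nonzero component of a codeword. For every x in the
   support of c_s, the entries in position x of the M blocks are the values of a nonzero
   polynomial of degree at most s - 1 at the distinct points w^0, ..., w^(M-1); hence at most
   s - 1 of them vanish and the codeword has weight at least (M - s + 1) wt(c_s). *)

lemma finite_field_exists_root_of_unity:
  assumes "M dvd CARD('a::{field,finite}) - 1"
  shows "\<exists>w :: 'a. \<forall>j. w ^ j = 1 \<longleftrightarrow> M dvd j"
proof -
  let ?R = "cring_class_ops :: 'a ring"
  let ?G = "mult_of ?R"
  interpret G: group ?G by (rule field.field_mult_group[OF field_class])
  have pow: "x [^]\<^bsub>?G\<^esub> n = x ^ n" for x :: 'a and n :: nat
    by (simp add: nat_pow_mult_of power_class)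
  have carrier: "carrier ?G = UNIV - {0}"
    by (simp add: cring_class_ops_def)
  have fin: "finite (carrier ?G)" by simp
  have order: "order ?G = CARD('a) - 1"
    unfolding order_def carrier by (simp add: card_Diff_singleton)
  have fin_R: "finite (carrier ?R)" by (simp add: cring_class_ops_def)
  from field.finite_field_mult_group_has_gen[OF field_class fin_R]
  obtain a where a: "a \<in> carrier ?G"
    and gen: "carrier ?G = {a [^]\<^bsub>?R\<^esub> i | i. i \<in> (UNIV :: nat set)}" ..
  have "order ?G \<le> G.ord a"
  proof -
    have "carrier ?G = (\<lambda>i. a [^]\<^bsub>?G\<^esub> i) ` {0 .. G.ord a - 1}"
      using gen G.ord_elems[OF fin a] unfolding nat_pow_mult_of by auto
    then have "order ?G \<le> card {0 .. G.ord a - 1}"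
      unfolding order_def by (metis card_image_le finite_atLeastAtMost)
    then show ?thesis using G.ord_ge_1[OF fin a] by simp
  qed
  then have ord_a: "G.ord a = CARD('a) - 1"
    using G.ord_le_group_order[OF fin a] order by simp
  obtain K where K: "CARD('a) - 1 = M * K" using assms by blast
  have "K \<noteq> 0" using K order G.ord_ge_1[OF fin a] ord_a by auto
  then have "G.ord (a [^]\<^bsub>?G\<^esub> K) = M"
    using G.ord_pow[OF a] ord_a K by simp
  then have "(a ^ K) ^ j = 1 \<longleftrightarrow> M dvd j" for j
    using G.pow_eq_id[OF G.nat_pow_closed[OF a], of K j] by (simp add: pow one_class)
  then show ?thesis by blast
qed

lemma CHAR_of_card_square_prime_power:
  assumes "prime_power r" and "CARD('a::{field,finite}) = r ^ 2"
  obtains e where "prime CHAR('a)" and "r = CHAR('a) ^ e" and "1 \<le> e"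
proof -
  obtain p e where p: "prime p" and "1 \<le> e" and r: "r = p ^ e"
    using assms(1) unfolding prime_power_def by blast
  have "prime CHAR('a)" by (rule prime_CHAR_semidom[OF finite_imp_CHAR_pos]) simp
  moreover have "CHAR('a) dvd p ^ (e * 2)"
    using CHAR_dvd_CARD[where 'a='a] assms(2) r by (simp add: power_mult)
  ultimately have "CHAR('a) = p" using p prime_dvd_power primes_dvd_imp_eq by blast
  with that \<open>prime CHAR('a)\<close> \<open>1 \<le> e\<close> r show thesis by blast
qed

lemma of_nat_neq_0_if_dvd_CHAR_power_plus_1:
  assumes "prime CHAR('a::semiring_1)" and "r = CHAR('a) ^ e" and "1 \<le> e" and "M dvd r + 1"
  shows "(of_nat M :: 'a) \<noteq> 0"
proof
  assume "(of_nat M :: 'a) = 0"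
  then have "CHAR('a) dvd r + 1" using assms(4) of_nat_eq_0_iff_char_dvd dvd_trans by blast
  moreover have "CHAR('a) dvd r" using assms(2,3) by simp
  ultimately have "CHAR('a) dvd 1" using dvd_add_right_iff[of "CHAR('a)" r 1] by blast
  then show False using assms(1) by simp
qed

lemma inj_on_power_lessThan:
  fixes w :: "'a::field"
  assumes order: "\<And>j. w ^ j = 1 \<longleftrightarrow> M dvd j"
  shows "inj_on (\<lambda>j. w ^ j) {..<M}"
proof -
  have no_collision: "w ^ i \<noteq> w ^ l" if "i < l" "l < M" for i l
  proof
    assume eq: "w ^ i = w ^ l"
    have "w ^ M = 1" using order by simp
    then have "w \<noteq> 0" using that by (auto simp: power_0_left)
    moreover have "w ^ l = w ^ i * w ^ (l - i)" using that(1) by (simp flip: power_add)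
    ultimately have "w ^ (l - i) = 1" using eq by simp
    then have "M dvd l - i" using order by simp
    then show False using that by (simp add: nat_dvd_not_less)
  qed
  show ?thesis by (rule inj_onI) (metis lessThan_iff linorder_neqE_nat no_collision)
qed

lemma vector_space_vscale: "vector_space (vscale :: 'a::field \<Rightarrow> (nat \<Rightarrow> 'a) \<Rightarrow> (nat \<Rightarrow> 'a))"
  by unfold_locales (auto simp: vscale_def fun_eq_iff algebra_simps)

lemma linear_code_support: "linear_code n C \<Longrightarrow> v \<in> C \<Longrightarrow> n \<le> i \<Longrightarrow> v i = 0"
  unfolding linear_code_def by blast

lemma linear_code_finite:
  fixes C :: "(nat \<Rightarrow> 'a::{field,finite}) set"
  assumes "linear_code n C"
  shows "finite C"
proof -
  have "C \<subseteq> (\<lambda>g i. if i < n then g i else 0) ` PiE {..<n} (\<lambda>_. UNIV)"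
  proof
    fix v assume "v \<in> C"
    then have "v = (\<lambda>i. if i < n then restrict v {..<n} i else 0)"
      using linear_code_support[OF assms] by (auto simp: fun_eq_iff)
    then show "v \<in> (\<lambda>g i. if i < n then g i else 0) ` PiE {..<n} (\<lambda>_. UNIV)"
      by (intro image_eqI[of _ _ "restrict v {..<n}"]) auto
  qed
  then show ?thesis by (rule finite_subset) (intro finite_imageI finite_PiE; simp)
qed

lemma card_linear_code:
  fixes C :: "(nat \<Rightarrow> 'a::{field,finite}) set"
  assumes "linear_code n C"
  shows "card C = CARD('a) ^ code_dim C"
proof -
  interpret V: vector_space "vscale :: 'a \<Rightarrow> (nat \<Rightarrow> 'a) \<Rightarrow> (nat \<Rightarrow> 'a)"
    by (rule vector_space_vscale)
  have sub: "V.subspace C" using assms unfolding linear_code_def by simp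
  obtain B where B: "B \<subseteq> C" "V.independent B" "C \<subseteq> V.span B" "card B = V.dim C"
    using V.basis_exists by blast
  have fin: "finite B" using B(1) linear_code_finite[OF assms] by (rule finite_subset)
  define f where "f u = (\<Sum>v\<in>B. vscale (u v) v)" for u
  have "C = range f"
    using V.span_finite[OF fin] V.span_subspace[OF B(1,3) sub] unfolding f_def by simp
  also have "\<dots> = f ` PiE B (\<lambda>_. UNIV)"
  proof (rule equalityI)
    show "range f \<subseteq> f ` PiE B (\<lambda>_. UNIV)"
    proof
      fix y assume "y \<in> range f"
      then obtain u where "y = f u" by blast
      moreover have "f u = f (restrict u B)" unfolding f_def by (intro sum.cong) auto
      ultimately show "y \<in> f ` PiE B (\<lambda>_. UNIV)" by auto
    qed
  qed auto
  finally have C: "C = f ` PiE B (\<lambda>_. UNIV)" .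
  have "inj_on f (PiE B (\<lambda>_. UNIV))"
  proof (rule inj_onI)
    fix u u' assume u: "u \<in> PiE B (\<lambda>_. UNIV)" and u': "u' \<in> PiE B (\<lambda>_. UNIV)" and "f u = f u'"
    then have "(\<Sum>v\<in>B. vscale (u v - u' v) v) = 0"
      unfolding f_def by (simp add: V.scale_left_diff_distrib sum_subtractf)
    from V.independentD[OF B(2) fin order_refl this] have "\<forall>v\<in>B. u v - u' v = 0" by blast
    then show "u = u'" using u u' by (intro PiE_ext) auto
  qed
  then have "card C = card (PiE B (\<lambda>_. UNIV :: 'a set))" using C by (simp add: card_image)
  also have "\<dots> = CARD('a) ^ card B" using fin by (simp add: card_PiE)
  finally show ?thesis using B(4) unfolding code_dim_def by simp
qed

lemma linear_code_zero:
  fixes C :: "(nat \<Rightarrow> 'a::field) set"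
  assumes "linear_code n C"
  shows "0 \<in> C"
proof -
  interpret V: vector_space "vscale :: 'a \<Rightarrow> (nat \<Rightarrow> 'a) \<Rightarrow> (nat \<Rightarrow> 'a)"
    by (rule vector_space_vscale)
  show ?thesis using assms V.subspace_0 unfolding linear_code_def by blast
qed

lemma min_dist_le_hamming_wt: "v \<in> C \<Longrightarrow> v \<noteq> 0 \<Longrightarrow> min_dist n C \<le> hamming_wt n v"
  unfolding min_dist_def by (intro cInf_lower) auto

lemma hamming_wt_pos:
  assumes "v \<noteq> 0" and support: "\<And>i. n \<le> i \<Longrightarrow> v i = 0"
  shows "0 < hamming_wt n v"
proof -
  obtain x where x: "v x \<noteq> 0" using assms(1) unfolding fun_eq_iff by auto
  then have "x < n" using support not_le by blast
  with x show ?thesis unfolding hamming_wt_def by (subst card_gt_0_iff) auto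
qed

lemma sum_lessThan_mult_blocks:
  fixes f :: "nat \<Rightarrow> 'a::comm_monoid_add"
  shows "(\<Sum>t<M * m. f t) = (\<Sum>j<M. \<Sum>s<m. f (j * m + s))"
proof -
  have "(\<Sum>t<M * m. f t) = (\<Sum>j<M. sum f {j * m..<j * m + m})" using sum.nat_group[of f m M] by simp
  also have "\<dots> = (\<Sum>j<M. \<Sum>s<m. f (j * m + s))"
  proof (rule sum.cong[OF refl])
    fix j assume "j \<in> {..<M}"
    show "sum f {j * m..<j * m + m} = (\<Sum>s<m. f (j * m + s))"
      using sum.shift_bounds_nat_ivl[of f 0 "j * m" m] by (simp add: atLeast0LessThan add.commute)
  qed
  finally show ?thesis .
qed

lemma hamming_wt_blocks:
  "hamming_wt (M * m) v = (\<Sum>s<m. card {j. j < M \<and> v (j * m + s) \<noteq> 0})"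
proof -
  have card_eq: "card {i. i < n \<and> P i} = (\<Sum>i<n. if P i then 1 else 0)" for n and P :: "nat \<Rightarrow> bool"
    using sum.inter_filter[of "{..<n}" "\<lambda>_. 1 :: nat" P] by simp
  show ?thesis
    unfolding hamming_wt_def card_eq sum_lessThan_mult_blocks by (rule sum.swap)
qed

(* [C_0, ..., C_(M-1)] * A: block j (positions j*m, ..., j*m + m - 1) of the codeword is
   the combination  sum_i A i j * c_i  of the component codewords c_i. *)
definition mp_word :: "(nat \<Rightarrow> nat \<Rightarrow> 'a::comm_semiring_1) \<Rightarrow> nat \<Rightarrow> nat \<Rightarrow> (nat \<Rightarrow> nat \<Rightarrow> 'a) \<Rightarrow> nat \<Rightarrow> 'a"
  where "mp_word A M m c t = (if t < M * m then \<Sum>i<M. A i (t div m) * c i (t mod m) else 0)"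

definition mp_code :: "(nat \<Rightarrow> nat \<Rightarrow> 'a::comm_semiring_1) \<Rightarrow> nat \<Rightarrow> nat \<Rightarrow> (nat \<Rightarrow> (nat \<Rightarrow> 'a) set) \<Rightarrow> (nat \<Rightarrow> 'a) set"
  where "mp_code A M m C = mp_word A M m ` PiE {..<M} C"

lemma mp_word_block:
  assumes "j < M" and "s < m"
  shows "mp_word A M m c (j * m + s) = (\<Sum>i<M. A i j * c i s)"
proof -
  have "j * m + s < Suc j * m" using assms(2) by simp
  also have "\<dots> \<le> M * m" using assms(1) by (intro mult_right_mono) auto
  finally show ?thesis using assms(2) unfolding mp_word_def by simp
qed

lemma mp_word_cong: "(\<And>i. i < M \<Longrightarrow> c i = c' i) \<Longrightarrow> mp_word A M m c = mp_word A M m c'"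
  unfolding mp_word_def by (intro ext if_cong refl sum.cong) auto

lemma mp_word_in_mp_code: "(\<And>i. i < M \<Longrightarrow> c i \<in> C i) \<Longrightarrow> mp_word A M m c \<in> mp_code A M m C"
  unfolding mp_code_def by (rule image_eqI[of _ _ "restrict c {..<M}"]) (auto intro: mp_word_cong)

lemma mp_word_add: "mp_word A M m c + mp_word A M m c' = mp_word A M m (\<lambda>i. c i + c' i)"
  by (simp add: fun_eq_iff mp_word_def sum.distrib distrib_left)

lemma mp_word_vscale: "vscale a (mp_word A M m c) = mp_word A M m (\<lambda>i. vscale a (c i))"
  by (simp add: fun_eq_iff mp_word_def vscale_def sum_distrib_left mult_ac)

lemma mp_word_zero: "mp_word A M m (\<lambda>i. 0) = 0"
  by (simp add: fun_eq_iff mp_word_def)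

lemma linear_code_mp_code:
  fixes A :: "nat \<Rightarrow> nat \<Rightarrow> 'a::field"
  assumes "\<And>i. i < M \<Longrightarrow> linear_code m (C i)"
  shows "linear_code (M * m) (mp_code A M m C)"
proof -
  interpret V: vector_space "vscale :: 'a \<Rightarrow> (nat \<Rightarrow> 'a) \<Rightarrow> (nat \<Rightarrow> 'a)"
    by (rule vector_space_vscale)
  have sub: "V.subspace (C i)" if "i < M" for i using assms[OF that] unfolding linear_code_def by simp
  have "V.subspace (mp_code A M m C)"
  proof (rule V.subspaceI)
    show "0 \<in> mp_code A M m C"
      using mp_word_in_mp_code[of M "\<lambda>i. 0" C] V.subspace_0[OF sub] by (simp add: mp_word_zero)
  next
    fix x y assume "x \<in> mp_code A M m C" "y \<in> mp_code A M m C"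
    then show "x + y \<in> mp_code A M m C"
      unfolding mp_code_def
      by (auto simp: mp_word_add intro!: mp_word_in_mp_code[unfolded mp_code_def] V.subspace_add[OF sub])
  next
    fix a x assume "x \<in> mp_code A M m C"
    then show "vscale a x \<in> mp_code A M m C"
      unfolding mp_code_def
      by (auto simp: mp_word_vscale intro!: mp_word_in_mp_code[unfolded mp_code_def] V.subspace_scale[OF sub])
  qed
  moreover have "\<forall>v\<in>mp_code A M m C. \<forall>i\<ge>M * m. v i = 0"
    unfolding mp_code_def mp_word_def by auto
  ultimately show ?thesis unfolding linear_code_def by blast
qed

definition herm_orthogonal_rows :: "nat \<Rightarrow> nat \<Rightarrow> (nat \<Rightarrow> nat \<Rightarrow> 'a::field) \<Rightarrow> 'a \<Rightarrow> bool"
  where "herm_orthogonal_rows r M A \<mu> \<longleftrightarrow>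
    (\<forall>i<M. \<forall>l<M. (\<Sum>j<M. A i j * A l j ^ r) = (if i = l then \<mu> else 0))"

lemma mp_word_recover:
  assumes "herm_orthogonal_rows r M A \<mu>" and "l < M" and "s < m"
  shows "(\<Sum>j<M. mp_word A M m c (j * m + s) * A l j ^ r) = \<mu> * c l s"
proof -
  have "(\<Sum>j<M. mp_word A M m c (j * m + s) * A l j ^ r)
      = (\<Sum>j<M. \<Sum>i<M. c i s * (A i j * A l j ^ r))"
    using assms(3) by (intro sum.cong refl) (simp add: mp_word_block sum_distrib_left mult_ac)
  also have "\<dots> = (\<Sum>i<M. c i s * (\<Sum>j<M. A i j * A l j ^ r))"
    unfolding sum_distrib_left by (rule sum.swap)
  also have "\<dots> = (\<Sum>i<M. c i s * (if i = l then \<mu> else 0))"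
    using assms(1,2) unfolding herm_orthogonal_rows_def by (intro sum.cong) auto
  also have "\<dots> = \<mu> * c l s" using assms(2) by (simp add: if_distrib cong: if_cong)
  finally show ?thesis .
qed

lemma inj_on_mp_word:
  assumes "herm_orthogonal_rows r M A \<mu>" and "\<mu> \<noteq> 0"
    and "\<And>i. i < M \<Longrightarrow> linear_code m (C i)"
  shows "inj_on (mp_word A M m) (PiE {..<M} C)"
proof (rule inj_onI)
  fix c c' assume c: "c \<in> PiE {..<M} C" and c': "c' \<in> PiE {..<M} C"
    and eq: "mp_word A M m c = mp_word A M m c'"
  have "c l s = c' l s" if "l < M" for l s
  proof (cases "s < m")
    case True
    have "\<mu> * c l s = (\<Sum>j<M. mp_word A M m c (j * m + s) * A l j ^ r)"
      by (rule mp_word_recover[OF assms(1) that True, symmetric])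
    also have "\<dots> = \<mu> * c' l s"
      unfolding eq by (rule mp_word_recover[OF assms(1) that True])
    finally show ?thesis using assms(2) by simp
  next
    case False
    moreover have "c l \<in> C l" "c' l \<in> C l" using c c' that by auto
    ultimately show ?thesis using linear_code_support[OF assms(3)[OF that]] not_less by metis
  qed
  then show "c = c'" using c c' by (intro PiE_ext) auto
qed

lemma sum_rotate3: "(\<Sum>j\<in>J. \<Sum>s\<in>S. \<Sum>l\<in>L. f j s l) = (\<Sum>l\<in>L. \<Sum>s\<in>S. \<Sum>j\<in>J. f j s l)"
proof -
  have "(\<Sum>j\<in>J. \<Sum>s\<in>S. \<Sum>l\<in>L. f j s l) = (\<Sum>j\<in>J. \<Sum>l\<in>L. \<Sum>s\<in>S. f j s l)"
    by (rule sum.cong[OF refl], rule sum.swap)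
  also have "\<dots> = (\<Sum>l\<in>L. \<Sum>j\<in>J. \<Sum>s\<in>S. f j s l)" by (rule sum.swap)
  also have "\<dots> = (\<Sum>l\<in>L. \<Sum>s\<in>S. \<Sum>j\<in>J. f j s l)" by (rule sum.cong[OF refl], rule sum.swap)
  finally show ?thesis .
qed

lemma herm_ip_mp_word:
  fixes A :: "nat \<Rightarrow> nat \<Rightarrow> 'a::field"
  assumes "prime CHAR('a)" and "r = CHAR('a) ^ e"
    and rows: "herm_orthogonal_rows r M A \<mu>"
  shows "herm_ip r (M * m) (mp_word A M m c) (mp_word A M m c') = \<mu> * (\<Sum>l<M. herm_ip r m (c l) (c' l))"
proof -
  let ?u = "mp_word A M m c"
  have conj_sum: "(\<Sum>l<M. A l j * c' l s) ^ r = (\<Sum>l<M. A l j ^ r * c' l s ^ r)" for j s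
    by (simp only: freshmans_dream_sum'[OF assms(1,2)] power_mult_distrib)
  have "herm_ip r (M * m) ?u (mp_word A M m c')
      = (\<Sum>j<M. \<Sum>s<m. ?u (j * m + s) * (\<Sum>l<M. A l j ^ r * c' l s ^ r))"
    unfolding herm_ip_def sum_lessThan_mult_blocks
    by (intro sum.cong refl) (simp add: mp_word_block conj_sum)
  also have "\<dots> = (\<Sum>l<M. \<Sum>s<m. c' l s ^ r * (\<Sum>j<M. ?u (j * m + s) * A l j ^ r))"
    unfolding sum_distrib_left by (subst sum_rotate3) (simp add: mult_ac)
  also have "\<dots> = (\<Sum>l<M. \<Sum>s<m. \<mu> * (c l s * c' l s ^ r))"
    by (intro sum.cong refl) (simp add: mp_word_recover[OF rows])
  also have "\<dots> = \<mu> * (\<Sum>l<M. herm_ip r m (c l) (c' l))"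
    unfolding herm_ip_def by (simp add: sum_distrib_left)
  finally show ?thesis .
qed

lemma herm_self_orth_mp_code:
  fixes A :: "nat \<Rightarrow> nat \<Rightarrow> 'a::field"
  assumes "prime CHAR('a)" and "r = CHAR('a) ^ e" and "herm_orthogonal_rows r M A \<mu>"
    and "\<And>i. i < M \<Longrightarrow> herm_self_orth r m (C i)"
  shows "herm_self_orth r (M * m) (mp_code A M m C)"
  using assms(4) unfolding herm_self_orth_def mp_code_def
  by (auto simp: herm_ip_mp_word[OF assms(1-3)] PiE_iff intro!: sum.neutral)

lemma one_less_card_field: "1 < CARD('a::{field,finite})"
proof -
  have "card {0, 1 :: 'a} \<le> CARD('a)" by (rule card_mono) auto
  then show ?thesis by simp
qed

lemma code_dim_mp_code:
  fixes A :: "nat \<Rightarrow> nat \<Rightarrow> 'a::{field,finite}"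
  assumes "herm_orthogonal_rows r M A \<mu>" and "\<mu> \<noteq> 0"
    and linear: "\<And>i. i < M \<Longrightarrow> linear_code m (C i)"
  shows "code_dim (mp_code A M m C) = (\<Sum>i<M. code_dim (C i))"
proof -
  have "CARD('a) ^ code_dim (mp_code A M m C) = card (mp_code A M m C)"
    by (rule card_linear_code[OF linear_code_mp_code[OF linear], symmetric])
  also have "\<dots> = card (PiE {..<M} C)"
    unfolding mp_code_def by (rule card_image[OF inj_on_mp_word[OF assms]])
  also have "\<dots> = (\<Prod>i<M. CARD('a) ^ code_dim (C i))"
    by (simp add: card_PiE card_linear_code[OF linear])
  also have "\<dots> = CARD('a) ^ (\<Sum>i<M. code_dim (C i))"
    by (rule power_sum[symmetric])
  finally show ?thesis using one_less_card_field[where 'a='a] by simp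
qed

definition vandermonde :: "'a::monoid_mult \<Rightarrow> nat \<Rightarrow> nat \<Rightarrow> 'a"
  where "vandermonde w i j = w ^ (i * j)"

lemma herm_orthogonal_rows_vandermonde:
  fixes w :: "'a::field"
  assumes order: "\<And>j. w ^ j = 1 \<longleftrightarrow> M dvd j" and "M dvd r + 1"
  shows "herm_orthogonal_rows r M (vandermonde w) (of_nat M)"
  unfolding herm_orthogonal_rows_def
proof (intro allI impI)
  fix i l assume i: "i < M" and l: "l < M"
  define \<beta> where "\<beta> = w ^ i * (w ^ l) ^ r"
  have terms: "vandermonde w i j * vandermonde w l j ^ r = \<beta> ^ j" for j
    by (simp add: vandermonde_def \<beta>_def power_mult_distrib flip: power_mult) (simp add: mult_ac)
  have "w ^ M = 1" by (simp add: order)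
  have "w ^ (r + 1) = 1" unfolding order by (rule assms(2))
  have "w \<noteq> 0" using \<open>w ^ M = 1\<close> i by (auto simp: power_0_left)
  have "\<beta> ^ M = 1"
    using \<open>w ^ M = 1\<close> by (simp add: \<beta>_def power_mult_distrib flip: power_mult) (simp add: mult_ac power_mult)
  have "\<beta> * w ^ l = w ^ i * (w ^ l) ^ (r + 1)" by (simp add: \<beta>_def mult_ac)
  also have "(w ^ l) ^ (r + 1) = (w ^ (r + 1)) ^ l" by (simp only: mult.commute flip: power_mult)
  finally have "\<beta> * w ^ l = w ^ i" using \<open>w ^ (r + 1) = 1\<close> by simp
  then have "\<beta> = 1 \<longleftrightarrow> w ^ l = w ^ i" using \<open>w \<noteq> 0\<close> by auto
  also have "\<dots> \<longleftrightarrow> i = l"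
    using inj_on_power_lessThan[OF order] i l unfolding inj_on_def by blast
  finally have "\<beta> = 1 \<longleftrightarrow> i = l" .
  then show "(\<Sum>j<M. vandermonde w i j * vandermonde w l j ^ r) = (if i = l then of_nat M else 0)"
    unfolding terms using \<open>\<beta> ^ M = 1\<close> by (simp add: sum_gp_strict)
qed

lemma card_roots_le_degree:
  fixes p :: "'a::idom poly"
  assumes "p \<noteq> 0" and "inj_on f A"
  shows "card {a \<in> A. poly p (f a) = 0} \<le> degree p"
proof -
  have "card {a \<in> A. poly p (f a) = 0} = card (f ` {a \<in> A. poly p (f a) = 0})"
    using assms(2) by (intro card_image[symmetric]) (auto intro: inj_on_subset)
  also have "\<dots> \<le> card {x. poly p x = 0}"
    using poly_roots_finite[OF assms(1)] by (intro card_mono) auto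
  also have "\<dots> \<le> degree p" by (rule card_poly_roots_bound[OF assms(1)])
  finally show ?thesis .
qed

lemma card_nonzero_vandermonde_column:
  fixes w :: "'a::field"
  assumes inj: "inj_on (\<lambda>j. w ^ j) {..<M}" and "s < M" and "x < m"
    and high: "\<And>i. s < i \<Longrightarrow> i < M \<Longrightarrow> c i = 0" and "c s x \<noteq> 0"
  shows "M - s \<le> card {j. j < M \<and> mp_word (vandermonde w) M m c (j * m + x) \<noteq> 0}"
proof -
  define P where "P = (\<Sum>i\<le>s. Polynomial.monom (c i x) i)"
  have entry_eq: "mp_word (vandermonde w) M m c (j * m + x) = poly P (w ^ j)" if "j < M" for j
  proof -
    have "mp_word (vandermonde w) M m c (j * m + x) = (\<Sum>i<M. w ^ (i * j) * c i x)"
      by (simp only: mp_word_block[OF that \<open>x < m\<close>] vandermonde_def)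
    also have "\<dots> = (\<Sum>i\<le>s. w ^ (i * j) * c i x)"
      using \<open>s < M\<close> high by (intro sum.mono_neutral_right) auto
    also have "\<dots> = poly P (w ^ j)"
      unfolding P_def by (simp add: poly_sum poly_monom mult_ac flip: power_mult)
    finally show ?thesis .
  qed
  have "Polynomial.coeff P s = c s x" unfolding P_def by (simp add: coeff_sum)
  then have "P \<noteq> 0" using \<open>c s x \<noteq> 0\<close> by auto
  have "degree P \<le> s"
    unfolding P_def by (intro degree_sum_le) (auto intro: order_trans[OF degree_monom_le])
  let ?Z = "{j \<in> {..<M}. poly P (w ^ j) = 0}"
  let ?N = "{j. j < M \<and> mp_word (vandermonde w) M m c (j * m + x) \<noteq> 0}"
  have "card ?Z \<le> s" using card_roots_le_degree[OF \<open>P \<noteq> 0\<close> inj] \<open>degree P \<le> s\<close> by simp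
  moreover have "card ?Z + card ?N = card (?Z \<union> ?N)"
    by (rule card_Un_disjoint[symmetric]) (use entry_eq in auto)
  moreover have "?Z \<union> ?N = {..<M}" using entry_eq by auto
  ultimately show ?thesis by simp
qed

lemma hamming_wt_vandermonde_word:
  fixes w :: "'a::field"
  assumes inj: "inj_on (\<lambda>j. w ^ j) {..<M}" and "s < M"
    and high: "\<And>i. s < i \<Longrightarrow> i < M \<Longrightarrow> c i = 0"
  shows "(M - s) * hamming_wt m (c s) \<le> hamming_wt (M * m) (mp_word (vandermonde w) M m c)"
proof -
  let ?N = "\<lambda>x. card {j. j < M \<and> mp_word (vandermonde w) M m c (j * m + x) \<noteq> 0}"
  have "(M - s) * hamming_wt m (c s) = (\<Sum>x | x < m \<and> c s x \<noteq> 0. M - s)"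
    unfolding hamming_wt_def by simp
  also have "\<dots> \<le> (\<Sum>x | x < m \<and> c s x \<noteq> 0. ?N x)"
    using card_nonzero_vandermonde_column[OF inj \<open>s < M\<close> _ high] by (intro sum_mono) auto
  also have "\<dots> \<le> (\<Sum>x<m. ?N x)" by (intro sum_mono2) auto
  also have "\<dots> = hamming_wt (M * m) (mp_word (vandermonde w) M m c)"
    by (rule hamming_wt_blocks[symmetric])
  finally show ?thesis .
qed

lemma hamming_wt_vandermonde_word_leading_block:
  fixes w :: "'a::field"
  assumes inj: "inj_on (\<lambda>j. w ^ j) {..<M}" and "i < M" and "c i \<noteq> 0"
  obtains s where "s < M" and "c s \<noteq> 0"
    and "(M - s) * hamming_wt m (c s) \<le> hamming_wt (M * m) (mp_word (vandermonde w) M m c)"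
proof -
  let ?S = "{i. i < M \<and> c i \<noteq> 0}"
  define s where "s = Max ?S"
  have "s \<in> ?S" unfolding s_def using assms(2,3) by (intro Max_in) auto
  moreover have "c l = 0" if "s < l" "l < M" for l
    using that Max_ge[of ?S l] unfolding s_def by fastforce
  ultimately show thesis using that hamming_wt_vandermonde_word[OF inj] by blast
qed

lemma vandermonde_code_zero_imp_last_component_zero:
  fixes w :: "'a::field"
  assumes "0 < M" and inj: "inj_on (\<lambda>j. w ^ j) {..<M}"
    and linear: "\<And>i. i < M \<Longrightarrow> linear_code m (C i)"
    and zero: "\<forall>u\<in>mp_code (vandermonde w) M m C. u = 0" and "v \<in> C (M - 1)"
  shows "v = 0"
proof (rule ccontr)
  assume "v \<noteq> 0"
  define c where "c = (\<lambda>i. if i = M - 1 then v else 0)"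
  have "c i \<in> C i" if "i < M" for i
    using \<open>v \<in> C (M - 1)\<close> linear_code_zero[OF linear[OF that]] unfolding c_def by simp
  then have "mp_word (vandermonde w) M m c \<in> mp_code (vandermonde w) M m C"
    by (rule mp_word_in_mp_code)
  then have "hamming_wt (M * m) (mp_word (vandermonde w) M m c) = 0"
    using zero unfolding hamming_wt_def by auto
  moreover obtain s where "s < M" "c s \<noteq> 0"
    and wt: "(M - s) * hamming_wt m (c s) \<le> hamming_wt (M * m) (mp_word (vandermonde w) M m c)"
    using hamming_wt_vandermonde_word_leading_block[OF inj, of "M - 1" c] \<open>0 < M\<close> \<open>v \<noteq> 0\<close>
    unfolding c_def by auto
  moreover have "0 < hamming_wt m v"
    using \<open>v \<noteq> 0\<close> linear_code_support[OF linear \<open>v \<in> C (M - 1)\<close>] \<open>0 < M\<close>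
    by (intro hamming_wt_pos) auto
  ultimately show False using \<open>0 < M\<close> unfolding c_def by (auto split: if_splits)
qed

lemma min_dist_vandermonde_code_ge:
  fixes w :: "'a::field"
  assumes "0 < M" and inj: "inj_on (\<lambda>j. w ^ j) {..<M}"
    and linear: "\<And>i. i < M \<Longrightarrow> linear_code m (C i)"
    and bound: "\<And>i. i < M \<Longrightarrow> b \<le> (M - i) * min_dist m (C i)"
  shows "b \<le> min_dist (M * m) (mp_code (vandermonde w) M m C)"
proof (cases "\<forall>u\<in>mp_code (vandermonde w) M m C. u = 0")
  case True
  (* Both minimum distances are then the unspecified value Inf {}. *)
  then have "{hamming_wt m v | v. v \<in> C (M - 1) \<and> v \<noteq> 0} = {}"
    and "{hamming_wt (M * m) v | v. v \<in> mp_code (vandermonde w) M m C \<and> v \<noteq> 0} = {}"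
    using vandermonde_code_zero_imp_last_component_zero[OF assms(1-3)] by auto
  then have "min_dist m (C (M - 1)) = min_dist (M * m) (mp_code (vandermonde w) M m C)"
    by (simp only: min_dist_def)
  then show ?thesis using bound[of "M - 1"] \<open>0 < M\<close> by simp
next
  case False
  show ?thesis unfolding min_dist_def
  proof (rule cInf_greatest)
    fix n assume "n \<in> {hamming_wt (M * m) v | v. v \<in> mp_code (vandermonde w) M m C \<and> v \<noteq> 0}"
    then obtain c where c: "c \<in> PiE {..<M} C" and nz: "mp_word (vandermonde w) M m c \<noteq> 0"
      and n: "n = hamming_wt (M * m) (mp_word (vandermonde w) M m c)"
      unfolding mp_code_def by blast
    have "\<exists>i<M. c i \<noteq> 0"
      using nz mp_word_cong[of M c "\<lambda>i. 0"] by (auto simp: mp_word_zero)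
    then obtain s where s: "s < M" "c s \<noteq> 0" and wt: "(M - s) * hamming_wt m (c s) \<le> n"
      using hamming_wt_vandermonde_word_leading_block[OF inj] n by metis
    have "b \<le> (M - s) * min_dist m (C s)" by (rule bound[OF s(1)])
    also have "\<dots> \<le> (M - s) * hamming_wt m (c s)"
      using c s by (intro mult_le_mono2 min_dist_le_hamming_wt) auto
    finally show "b \<le> n" using wt by simp
  qed (use False in blast)
qed

theorem corollary4p2:
  fixes r M m :: nat
    and C :: "nat \<Rightarrow> (nat \<Rightarrow> 'a::{field,finite}) set"
    and k d :: "nat \<Rightarrow> nat"
  assumes "prime_power r"
    and "CARD('a) = r ^ 2"
    and "M \<ge> 1" and "M dvd (r + 1)"
    and "\<And>i. i \<in> {1..M} \<Longrightarrow> linear_code m (C i) \<and> herm_self_orth r m (C i)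
            \<and> code_dim (C i) = k i \<and> min_dist m (C i) = d i"
  shows "\<exists>D :: (nat \<Rightarrow> 'a) set. linear_code (M * m) D \<and> herm_self_orth r (M * m) D
           \<and> code_dim D = (\<Sum>i=1..M. k i)
           \<and> min_dist (M * m) D \<ge> Min ((\<lambda>i. (M - i + 1) * d i) ` {1..M})"
proof -
  obtain e where char: "prime CHAR('a)" "r = CHAR('a) ^ e" "1 \<le> e"
    using assms(1,2) by (rule CHAR_of_card_square_prime_power)
  have "CARD('a) - 1 = (r + 1) * (r - 1)"
    unfolding assms(2) by (cases r) (simp_all add: power2_eq_square)
  then have "M dvd CARD('a) - 1" using assms(4) by (simp only: dvd_mult2)
  then obtain w :: 'a where order: "\<And>j. w ^ j = 1 \<longleftrightarrow> M dvd j"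
    using finite_field_exists_root_of_unity by blast
  have rows: "herm_orthogonal_rows r M (vandermonde w) (of_nat M)"
    by (rule herm_orthogonal_rows_vandermonde[OF order assms(4)])
  have "(of_nat M :: 'a) \<noteq> 0" by (rule of_nat_neq_0_if_dvd_CHAR_power_plus_1[OF char assms(4)])
  define C' where "C' i = C (Suc i)" for i
  have C': "linear_code m (C' i)" "herm_self_orth r m (C' i)" "code_dim (C' i) = k (Suc i)"
    "min_dist m (C' i) = d (Suc i)" if "i < M" for i
    using assms(5)[of "Suc i"] that unfolding C'_def by auto
  let ?D = "mp_code (vandermonde w) M m C'"
  have "Min ((\<lambda>i. (M - i + 1) * d i) ` {1..M}) \<le> min_dist (M * m) ?D"
  proof (rule min_dist_vandermonde_code_ge[OF _ inj_on_power_lessThan[OF order] C'(1)])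
    fix i assume "i < M"
    then have "(M - Suc i + 1) * d (Suc i) = (M - i) * min_dist m (C' i)"
      using C'(4) by (simp add: Suc_diff_Suc[symmetric])
    with \<open>i < M\<close> show "Min ((\<lambda>i. (M - i + 1) * d i) ` {1..M}) \<le> (M - i) * min_dist m (C' i)"
      by (intro Min_le) (auto intro!: image_eqI[of _ _ "Suc i"])
  qed (use assms(3) in simp)
  moreover have "code_dim ?D = (\<Sum>i=1..M. k i)"
    using code_dim_mp_code[OF rows \<open>of_nat M \<noteq> 0\<close> C'(1)] C'(3) by (simp add: sum.atLeast1_atMost_eq)
  moreover have "herm_self_orth r (M * m) ?D" by (rule herm_self_orth_mp_code[OF char(1,2) rows C'(2)])
  moreover have "linear_code (M * m) ?D" by (rule linear_code_mp_code) (rule C'(1))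
  ultimately show ?thesis by blast
qed

end
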